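(* Let $(\Omega,\mathcal F)$ be a measurable space and $w$ a capacity. Then $\{\mathrm{ES}^w_\alpha\}_{\alpha\in(0,1]}$ is a decreasing family of coherent risk measures if and only if $w$ is submodular.
   Context: A capacity is an increasing function $w:\mathcal F\to\mathbb R$ with $w(\varnothing)=0$, $w(\Omega)=1$; it is submodular if $w(A\cup B)+w(A\cap B)\le w(A)+w(B)$ for all $A,B\in\mathcal F$. For bounded measurable $X$ and $t\in(0,1)$, $\mathrm{VaR}^w_t(X)=\inf\{x\in\mathbb R:w(X\ge x)\le t\}$, and $\mathrm{ES}^w_\alpha(X)=\frac1\alpha\int_0^\alpha\mathrm{VaR}^w_t(X)\,\mathrm dt$. A coherent risk measure on bounded measurable functions is a mapping that is monotone, translation invariant ($\mathcal R(X+c)=\mathcal R(X)+c$), positively homogeneous and convex. "Decreasing family" means $\mathrm{ES}^w_\alpha(X)\ge\mathrm{ES}^w_\beta(X)$ whenever $\alpha\le\beta$. *)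

theory Defs
  imports "HOL-Analysis.Analysis"
begin

text \<open>The measurable space (Omega, F) is represented by a measure M
  (only space M and sets M are used).  A capacity is a set function on sets M.\<close>

definition capacity :: "'a measure \<Rightarrow> ('a set \<Rightarrow> real) \<Rightarrow> bool" where
  "capacity M w \<longleftrightarrow>
     (\<forall>A\<in>sets M. \<forall>B\<in>sets M. A \<subseteq> B \<longrightarrow> w A \<le> w B) \<and>
     w {} = 0 \<and> w (space M) = 1"

definition submodular_cap :: "'a measure \<Rightarrow> ('a set \<Rightarrow> real) \<Rightarrow> bool" where
  "submodular_cap M w \<longleftrightarrow>
     (\<forall>A\<in>sets M. \<forall>B\<in>sets M. w (A \<union> B) + w (A \<inter> B) \<le> w A + w B)"

definition bdd_meas :: "'a measure \<Rightarrow> ('a \<Rightarrow> real) set" where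
  "bdd_meas M = {X. X \<in> borel_measurable M \<and> bounded (X ` space M)}"

definition VaR :: "'a measure \<Rightarrow> ('a set \<Rightarrow> real) \<Rightarrow> ('a \<Rightarrow> real) \<Rightarrow> real \<Rightarrow> real" where
  "VaR M w X t = Inf {x. w {\<omega>\<in>space M. X \<omega> \<ge> x} \<le> t}"

definition ES :: "'a measure \<Rightarrow> ('a set \<Rightarrow> real) \<Rightarrow> real \<Rightarrow> ('a \<Rightarrow> real) \<Rightarrow> real" where
  "ES M w \<alpha> X = (1 / \<alpha>) * (LBINT t=0..\<alpha>. VaR M w X t)"

definition coherent :: "'a measure \<Rightarrow> (('a \<Rightarrow> real) \<Rightarrow> real) \<Rightarrow> bool" where
  "coherent M R \<longleftrightarrow>
     (\<forall>X\<in>bdd_meas M. \<forall>Y\<in>bdd_meas M. (\<forall>\<omega>\<in>space M. X \<omega> \<le> Y \<omega>) \<longrightarrow> R X \<le> R Y) \<and>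
     (\<forall>X\<in>bdd_meas M. \<forall>c::real. R (\<lambda>\<omega>. X \<omega> + c) = R X + c) \<and>
     (\<forall>X\<in>bdd_meas M. \<forall>l::real. l > 0 \<longrightarrow> R (\<lambda>\<omega>. l * X \<omega>) = l * R X) \<and>
     (\<forall>X\<in>bdd_meas M. \<forall>Y\<in>bdd_meas M. \<forall>l::real. 0 \<le> l \<and> l \<le> 1 \<longrightarrow>
        R (\<lambda>\<omega>. l * X \<omega> + (1 - l) * Y \<omega>) \<le> l * R X + (1 - l) * R Y)"

end

theory Submission
  imports Defs
begin

text \<open>
  For bounded \<open>X\<close>, \<open>\<alpha> \<cdot> ES\<^sup>w\<^sub>\<alpha> X\<close> is (up to normalisation) the area of the region
  \<open>{(t, x). 0 < t < \<alpha>, t < w {X \<ge> x}}\<close>: its slice at fixed \<open>t\<close> is an interval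
  ending at \<open>VaR\<^sup>w\<^sub>t X\<close>, its slice at fixed \<open>x\<close> has length \<open>min \<alpha> (w {X \<ge> x})\<close>.
  By Tonelli, \<open>ES\<^sup>w\<^sub>\<alpha>\<close> is therefore the Choquet integral for the distorted capacity
  \<open>min (w / \<alpha>) 1\<close>. These capacities decrease in \<open>\<alpha>\<close>, whence the monotonicity,
  and they are submodular when \<open>w\<close> is.

  A Choquet integral for a submodular capacity is subadditive: adding \<open>c \<cdot> 1\<^sub>A\<close>
  to \<open>Z\<close> raises it by at most \<open>c \<cdot> \<nu> A\<close>, and a bounded \<open>Y \<ge> 0\<close> is added to
  \<open>X\<close> in layers \<open>h \<cdot> 1{Y > j h}\<close>, whose costs form a lower Riemann sum for the
  Choquet integral of \<open>Y\<close>. With positive homogeneity this gives convexity.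
  Conversely \<open>ES\<^sup>w\<^sub>1\<close> is the Choquet integral for \<open>w\<close> itself, which maps
  \<open>1\<^sub>A + 1\<^sub>B\<close> to \<open>w (A \<union> B) + w (A \<inter> B)\<close>; so subadditivity of a
  coherent \<open>ES\<^sup>w\<^sub>1\<close> is submodularity of \<open>w\<close>.
\<close>

definition upper_level :: "'a measure \<Rightarrow> ('a \<Rightarrow> real) \<Rightarrow> real \<Rightarrow> 'a set" where
  "upper_level M X x = {\<omega>\<in>space M. x \<le> X \<omega>}"

text \<open>The Choquet integral \<open>\<integral>\<^sub>0\<^sup>\<infinity> \<nu> {X \<ge> x} dx - \<integral>\<^sub>-\<^sub>\<infinity>\<^sup>0 (1 - \<nu> {X \<ge> x}) dx\<close>
  of a bounded \<open>X\<close>, written as a single Lebesgue integral.\<close>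
definition choquet :: "'a measure \<Rightarrow> ('a set \<Rightarrow> real) \<Rightarrow> ('a \<Rightarrow> real) \<Rightarrow> real" where
  "choquet M \<nu> X = (\<integral>x. \<nu> (upper_level M X x) - indicator {..0} x \<partial>lborel)"

definition distorted_cap :: "('a set \<Rightarrow> real) \<Rightarrow> real \<Rightarrow> 'a set \<Rightarrow> real" where
  "distorted_cap w \<alpha> E = min (w E / \<alpha>) 1"

definition quantile :: "(real \<Rightarrow> real) \<Rightarrow> real \<Rightarrow> real" where
  "quantile g t = Inf {x. g x \<le> t}"

lemma bdd_measD:
  assumes "X \<in> bdd_meas M"
  shows "X \<in> borel_measurable M" "\<exists>K>0. \<forall>\<omega>\<in>space M. \<bar>X \<omega>\<bar> \<le> K"
proof -
  show "X \<in> borel_measurable M" using assms by (simp add: bdd_meas_def)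
  from assms obtain K where "\<forall>y\<in>X ` space M. \<bar>y\<bar> \<le> K"
    by (auto simp: bdd_meas_def bounded_iff)
  then show "\<exists>K>0. \<forall>\<omega>\<in>space M. \<bar>X \<omega>\<bar> \<le> K"
    by (intro exI[of _ "\<bar>K\<bar> + 1"]) force
qed

lemma bdd_measI:
  assumes "X \<in> borel_measurable M" "\<And>\<omega>. \<omega> \<in> space M \<Longrightarrow> \<bar>X \<omega>\<bar> \<le> K"
  shows "X \<in> bdd_meas M"
  using assms unfolding bdd_meas_def bounded_iff by auto

lemma bdd_meas_add:
  assumes X: "X \<in> bdd_meas M" and Y: "Y \<in> bdd_meas M"
  shows "(\<lambda>\<omega>. X \<omega> + Y \<omega>) \<in> bdd_meas M"
proof -
  obtain K L where "\<forall>\<omega>\<in>space M. \<bar>X \<omega>\<bar> \<le> K" "\<forall>\<omega>\<in>space M. \<bar>Y \<omega>\<bar> \<le> L"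
    using bdd_measD(2)[OF X] bdd_measD(2)[OF Y] by blast
  then show ?thesis
    using bdd_measD(1)[OF X] bdd_measD(1)[OF Y]
    by (intro bdd_measI[where K="K + L"]) (auto intro: order_trans[OF abs_triangle_ineq add_mono])
qed

lemma bdd_meas_cmult:
  assumes X: "X \<in> bdd_meas M"
  shows "(\<lambda>\<omega>. c * X \<omega>) \<in> bdd_meas M"
proof -
  obtain K where "\<forall>\<omega>\<in>space M. \<bar>X \<omega>\<bar> \<le> K" using bdd_measD(2)[OF X] by blast
  then show ?thesis
    using bdd_measD(1)[OF X]
    by (intro bdd_measI[where K="\<bar>c\<bar> * K"]) (auto simp: abs_mult mult_left_mono)
qed

lemma bdd_meas_const: "(\<lambda>\<omega>. c) \<in> bdd_meas M"
  by (rule bdd_measI[where K="\<bar>c\<bar>"]) auto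

lemma bdd_meas_add_const: "X \<in> bdd_meas M \<Longrightarrow> (\<lambda>\<omega>. X \<omega> + c) \<in> bdd_meas M"
  using bdd_meas_add[OF _ bdd_meas_const] by blast

lemma bdd_meas_indicator: "A \<in> sets M \<Longrightarrow> indicator A \<in> bdd_meas M"
  by (rule bdd_measI[where K=1]) (auto simp: indicator_def)

lemma bdd_meas_min_const:
  assumes Y: "Y \<in> bdd_meas M"
  shows "(\<lambda>\<omega>. min (Y \<omega>) c) \<in> bdd_meas M"
proof -
  obtain K where "\<forall>\<omega>\<in>space M. \<bar>Y \<omega>\<bar> \<le> K" using bdd_measD(2)[OF Y] by blast
  then show ?thesis
    using bdd_measD(1)[OF Y] by (intro bdd_measI[where K="K + \<bar>c\<bar>"]) (auto simp: min_def)
qed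

lemma capacity_mono:
  "capacity M \<nu> \<Longrightarrow> A \<in> sets M \<Longrightarrow> B \<in> sets M \<Longrightarrow> A \<subseteq> B \<Longrightarrow> \<nu> A \<le> \<nu> B"
  unfolding capacity_def by auto

lemma capacity_bounds:
  assumes "capacity M \<nu>" "A \<in> sets M"
  shows "0 \<le> \<nu> A" "\<nu> A \<le> 1"
  using assms capacity_mono[of M \<nu> "{}" A] capacity_mono[of M \<nu> A "space M"]
    sets.sets_into_space[of A M] by (auto simp: capacity_def)

lemma sets_upper_level [measurable]: "X \<in> borel_measurable M \<Longrightarrow> upper_level M X x \<in> sets M"
  unfolding upper_level_def by measurable

lemma upper_level_antimono: "x \<le> y \<Longrightarrow> upper_level M X y \<subseteq> upper_level M X x"
  unfolding upper_level_def by auto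

lemma upper_level_eq_space:
  "(\<And>\<omega>. \<omega> \<in> space M \<Longrightarrow> \<bar>X \<omega>\<bar> \<le> K) \<Longrightarrow> x \<le> -K \<Longrightarrow> upper_level M X x = space M"
  unfolding upper_level_def by force

lemma upper_level_eq_empty:
  "(\<And>\<omega>. \<omega> \<in> space M \<Longrightarrow> \<bar>X \<omega>\<bar> \<le> K) \<Longrightarrow> K < x \<Longrightarrow> upper_level M X x = {}"
  unfolding upper_level_def by force

lemma borel_measurable_antimono:
  fixes f :: "real \<Rightarrow> real"
  assumes "\<And>x y. x \<le> y \<Longrightarrow> f y \<le> f x"
  shows "f \<in> borel_measurable borel"
proof -
  have "mono (\<lambda>x. - f x)" using assms by (auto simp: mono_def)
  then have "(\<lambda>x. - (- f x)) \<in> borel_measurable borel"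
    using borel_measurable_mono borel_measurable_uminus by blast
  then show ?thesis by simp
qed

lemma integrable_lborel_bounded_support:
  fixes f :: "real \<Rightarrow> real"
  assumes "f \<in> borel_measurable borel" "\<And>x. \<bar>f x\<bar> \<le> B" "\<And>x. x \<notin> {a..b} \<Longrightarrow> f x = 0"
  shows "integrable lborel f"
  by (rule integrableI_bounded_set[where A="{a..b}" and B=B]) (use assms in \<open>auto simp: emeasure_lborel_Icc_eq\<close>)

lemma integral_indicator_atMost_diff:
  "integrable lborel (\<lambda>y. indicator {..0} y - indicator {..d} y :: real) \<and>
   (\<integral>y. indicator {..0} y - indicator {..d} y \<partial>lborel) = - (d::real)"
proof (cases "d \<le> 0")
  case True
  then have "(\<lambda>y. indicator {..0} y - indicator {..d} y :: real) = indicator {d<..0}"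
    by (auto simp: indicator_def fun_eq_iff)
  then show ?thesis using True by auto
next
  case False
  then have "(\<lambda>y. indicator {..0} y - indicator {..d} y :: real) = (\<lambda>y. - indicator {0<..d} y)"
    by (auto simp: indicator_def fun_eq_iff)
  then show ?thesis using False by auto
qed

section \<open>Choquet integrals\<close>

lemma integrable_choquet_integrand_restrict:
  assumes cap: "capacity M \<nu>" and X: "X \<in> bdd_meas M" and A: "A \<in> sets M"
  shows "integrable lborel (\<lambda>x. \<nu> (A \<inter> upper_level M X x) - \<nu> A * indicator {..0} x)"
proof -
  obtain K where K: "K > 0" "\<forall>\<omega>\<in>space M. \<bar>X \<omega>\<bar> \<le> K"
    using bdd_measD(2)[OF X] by blast
  have AU: "A \<inter> upper_level M X x \<in> sets M" for x
    using sets.Int[OF A sets_upper_level[OF bdd_measD(1)[OF X]]] .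
  have meas: "(\<lambda>x. \<nu> (A \<inter> upper_level M X x)) \<in> borel_measurable borel"
  proof (rule borel_measurable_antimono)
    fix x y :: real
    assume "x \<le> y"
    then have "A \<inter> upper_level M X y \<subseteq> A \<inter> upper_level M X x"
      by (intro Int_mono order_refl upper_level_antimono)
    then show "\<nu> (A \<inter> upper_level M X y) \<le> \<nu> (A \<inter> upper_level M X x)"
      by (rule capacity_mono[OF cap AU AU])
  qed
  show ?thesis
  proof (rule integrable_lborel_bounded_support[where B=2 and a="-K" and b=K])
    show "\<bar>\<nu> (A \<inter> upper_level M X x) - \<nu> A * indicator {..0} x\<bar> \<le> 2" for x
      using capacity_bounds[OF cap AU[of x]] capacity_bounds[OF cap A]
      by (auto simp: indicator_def)
    show "\<nu> (A \<inter> upper_level M X x) - \<nu> A * indicator {..0} x = 0" if "x \<notin> {-K..K}" for x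
    proof (cases "x < -K")
      case True
      then have "A \<inter> upper_level M X x = A"
        using upper_level_eq_space[of M X K x] K sets.sets_into_space[OF A] by auto
      then show ?thesis using True K by (auto simp: indicator_def)
    next
      case False
      then show ?thesis
        using that upper_level_eq_empty[of M X K x] K cap by (auto simp: capacity_def)
    qed
    show "(\<lambda>x. \<nu> (A \<inter> upper_level M X x) - \<nu> A * indicator {..0} x) \<in> borel_measurable borel"
      using meas by (intro borel_measurable_diff borel_measurable_times) auto
  qed
qed

lemma integrable_choquet_integrand:
  assumes cap: "capacity M \<nu>" and X: "X \<in> bdd_meas M"
  shows "integrable lborel (\<lambda>x. \<nu> (upper_level M X x) - indicator {..0} x)"
proof -
  have "space M \<inter> upper_level M X x = upper_level M X x" for x
    by (auto simp: upper_level_def)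
  then show ?thesis
    using integrable_choquet_integrand_restrict[OF cap X sets.top] cap
    by (simp add: capacity_def)
qed

lemma choquet_cong:
  assumes "\<And>\<omega>. \<omega> \<in> space M \<Longrightarrow> X \<omega> = Y \<omega>"
  shows "choquet M \<nu> X = choquet M \<nu> Y"
proof -
  have "upper_level M X = upper_level M Y"
    using assms by (auto simp: upper_level_def fun_eq_iff)
  then show ?thesis by (simp add: choquet_def)
qed

lemma choquet_mono:
  assumes cap: "capacity M \<nu>" and X: "X \<in> bdd_meas M" and Y: "Y \<in> bdd_meas M"
    and le: "\<And>\<omega>. \<omega> \<in> space M \<Longrightarrow> X \<omega> \<le> Y \<omega>"
  shows "choquet M \<nu> X \<le> choquet M \<nu> Y"
  unfolding choquet_def
proof (rule integral_mono[OF integrable_choquet_integrand[OF cap X] integrable_choquet_integrand[OF cap Y]])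
  fix x
  have "upper_level M X x \<subseteq> upper_level M Y x"
    using le by (force simp: upper_level_def)
  then show "\<nu> (upper_level M X x) - indicator {..0} x \<le> \<nu> (upper_level M Y x) - indicator {..0} x"
    using capacity_mono[OF cap sets_upper_level[OF bdd_measD(1)[OF X]]
        sets_upper_level[OF bdd_measD(1)[OF Y]]] by simp
qed

lemma choquet_mono_capacity:
  assumes "capacity M \<nu>" "capacity M \<mu>" and X: "X \<in> bdd_meas M"
    and le: "\<And>E. E \<in> sets M \<Longrightarrow> \<nu> E \<le> \<mu> E"
  shows "choquet M \<nu> X \<le> choquet M \<mu> X"
  unfolding choquet_def
  by (rule integral_mono[OF integrable_choquet_integrand[OF assms(1) X]
        integrable_choquet_integrand[OF assms(2) X]])
     (use le sets_upper_level bdd_measD(1)[OF X] in auto)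

lemma choquet_add_const:
  assumes cap: "capacity M \<nu>" and X: "X \<in> bdd_meas M"
  shows "choquet M \<nu> (\<lambda>\<omega>. X \<omega> + c) = choquet M \<nu> X + c"
proof -
  have shift: "upper_level M (\<lambda>\<omega>. X \<omega> + c) x = upper_level M X (x - c)" for x
    by (auto simp: upper_level_def)
  have "choquet M \<nu> (\<lambda>\<omega>. X \<omega> + c)
      = (\<integral>x. \<nu> (upper_level M X (x - c)) - indicator {..0} x \<partial>lborel)"
    unfolding choquet_def shift ..
  also have "\<dots> = (\<integral>y. \<nu> (upper_level M X (c + 1 * y - c)) - indicator {..0} (c + 1 * y) \<partial>lborel)"
    using lborel_integral_real_affine[of 1 "\<lambda>x. \<nu> (upper_level M X (x - c)) - indicator {..0} x" c]
    by simp
  also have "\<dots> = (\<integral>y. (\<nu> (upper_level M X y) - indicator {..0} y)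
                     + (indicator {..0} y - indicator {..-c} y) \<partial>lborel)"
    by (rule Bochner_Integration.integral_cong) (auto simp: indicator_def)
  also have "\<dots> = choquet M \<nu> X + c"
    unfolding choquet_def
    using integrable_choquet_integrand[OF cap X] integral_indicator_atMost_diff[of "-c"]
    by (subst Bochner_Integration.integral_add) auto
  finally show ?thesis .
qed

lemma choquet_zero:
  assumes "capacity M \<nu>"
  shows "choquet M \<nu> (\<lambda>\<omega>. 0) = 0"
proof -
  have "\<nu> (upper_level M (\<lambda>\<omega>. 0) x) - indicator {..0} x = 0" for x :: real
    using assms by (cases "x \<le> 0") (simp_all add: upper_level_def capacity_def)
  then show ?thesis by (simp add: choquet_def)
qed

lemma choquet_cmult:
  assumes cap: "capacity M \<nu>" and l: "0 \<le> l"
  shows "choquet M \<nu> (\<lambda>\<omega>. l * X \<omega>) = l * choquet M \<nu> X"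
proof (cases "l = 0")
  case True
  then show ?thesis using choquet_zero[OF cap] by simp
next
  case False
  with l have l: "0 < l" by simp
  have scale: "upper_level M (\<lambda>\<omega>. l * X \<omega>) x = upper_level M X (x / l)" for x
    using l by (auto simp: upper_level_def field_simps)
  have "choquet M \<nu> (\<lambda>\<omega>. l * X \<omega>)
      = (\<integral>x. \<nu> (upper_level M X (x / l)) - indicator {..0} x \<partial>lborel)"
    unfolding choquet_def scale ..
  also have "\<dots> = l * (\<integral>y. \<nu> (upper_level M X ((0 + l * y) / l)) - indicator {..0} (0 + l * y) \<partial>lborel)"
    using lborel_integral_real_affine[of l "\<lambda>x. \<nu> (upper_level M X (x / l)) - indicator {..0} x" 0] l
    by simp
  also have "(\<integral>y. \<nu> (upper_level M X ((0 + l * y) / l)) - indicator {..0} (0 + l * y) \<partial>lborel)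
      = choquet M \<nu> X"
    unfolding choquet_def
    by (rule Bochner_Integration.integral_cong)
       (use l in \<open>auto simp: indicator_def mult_le_0_iff\<close>)
  finally show ?thesis .
qed

lemma choquet_indicator_add:
  assumes cap: "capacity M \<nu>" and A: "A \<in> sets M" and B: "B \<in> sets M"
  shows "choquet M \<nu> (\<lambda>\<omega>. indicator A \<omega> + indicator B \<omega>) = \<nu> (A \<union> B) + \<nu> (A \<inter> B)"
proof -
  let ?Z = "\<lambda>\<omega>. indicator A \<omega> + indicator B \<omega> :: real"
  have AB: "A \<subseteq> space M" "B \<subseteq> space M" using A B sets.sets_into_space by auto
  have "choquet M \<nu> ?Z = (\<integral>x. \<nu> (A \<union> B) * indicator {0<..1::real} x
                              + \<nu> (A \<inter> B) * indicator {1<..2::real} x \<partial>lborel)"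
    unfolding choquet_def
  proof (rule Bochner_Integration.integral_cong)
    fix x :: real
    consider "x \<le> 0" | "0 < x \<and> x \<le> 1" | "1 < x \<and> x \<le> 2" | "2 < x" by linarith
    then show "\<nu> (upper_level M ?Z x) - indicator {..0} x
      = \<nu> (A \<union> B) * indicator {0<..1} x + \<nu> (A \<inter> B) * indicator {1<..2} x"
    proof cases
      case 1
      then have "upper_level M ?Z x = space M" by (auto simp: upper_level_def indicator_def)
      then show ?thesis using 1 cap by (simp add: capacity_def)
    next
      case 2
      then have "upper_level M ?Z x = A \<union> B" using AB by (auto simp: upper_level_def indicator_def)
      then show ?thesis using 2 by simp
    next
      case 3
      then have "upper_level M ?Z x = A \<inter> B" using AB by (auto simp: upper_level_def indicator_def)
      then show ?thesis using 3 by simp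
    next
      case 4
      then have "upper_level M ?Z x = {}" by (auto simp: upper_level_def indicator_def)
      then show ?thesis using 4 cap by (simp add: capacity_def)
    qed
  qed simp
  also have "\<dots> = \<nu> (A \<union> B) + \<nu> (A \<inter> B)"
    by (subst Bochner_Integration.integral_add) (auto intro!: integrable_real_indicator)
  finally show ?thesis .
qed

lemma choquet_indicator:
  assumes "capacity M \<nu>" "A \<in> sets M"
  shows "choquet M \<nu> (indicator A) = \<nu> A"
  using choquet_indicator_add[OF assms sets.empty_sets] assms(1) by (simp add: capacity_def)

section \<open>Subadditivity for submodular capacities\<close>

lemma choquet_add_indicator_le:
  assumes cap: "capacity M \<nu>" and sub: "submodular_cap M \<nu>" and Z: "Z \<in> bdd_meas M"
    and A: "A \<in> sets M" and c: "0 \<le> c"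
  shows "choquet M \<nu> (\<lambda>\<omega>. Z \<omega> + c * indicator A \<omega>) \<le> choquet M \<nu> Z + c * \<nu> A"
proof -
  define G where "G x = \<nu> (A \<inter> upper_level M Z x) - \<nu> A * indicator {..0} x" for x
  define W where "W = (\<lambda>\<omega>. Z \<omega> + c * indicator A \<omega>)"
  have Zm: "Z \<in> borel_measurable M" using bdd_measD(1)[OF Z] .
  have W: "W \<in> bdd_meas M"
    unfolding W_def by (rule bdd_meas_add[OF Z bdd_meas_cmult[OF bdd_meas_indicator[OF A]]])
  have G: "integrable lborel G"
    unfolding G_def by (rule integrable_choquet_integrand_restrict[OF cap Z A])
  have G_shift: "integrable lborel (\<lambda>x. G (x - c))" "(\<integral>x. G (x - c) \<partial>lborel) = integral\<^sup>L lborel G"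
    using lborel_integrable_real_affine[OF G, of 1 "-c"] lborel_integral_real_affine[of 1 G "-c"]
    by simp_all
  \<comment> \<open>The level sets of \<open>W\<close> are those of \<open>Z\<close> enlarged by \<open>A \<inter> {Z \<ge> x - c}\<close>;
    submodularity bounds the gain, which integrates to \<open>c \<cdot> \<nu> A\<close> by translation invariance.\<close>
  have pointwise: "\<nu> (upper_level M W x) - indicator {..0} x \<le>
      (\<nu> (upper_level M Z x) - indicator {..0} x) + (G (x - c) - G x)
        - \<nu> A * (indicator {..0} x - indicator {..c} x)" for x
  proof -
    have union: "upper_level M W x = upper_level M Z x \<union> (A \<inter> upper_level M Z (x - c))"
      using c by (auto simp: upper_level_def W_def indicator_def)
    have inter: "upper_level M Z x \<inter> (A \<inter> upper_level M Z (x - c)) = A \<inter> upper_level M Z x"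
      using upper_level_antimono[of "x - c" x M Z] c by auto
    have "\<nu> (upper_level M Z x \<union> (A \<inter> upper_level M Z (x - c)))
          + \<nu> (upper_level M Z x \<inter> (A \<inter> upper_level M Z (x - c)))
        \<le> \<nu> (upper_level M Z x) + \<nu> (A \<inter> upper_level M Z (x - c))"
      using sub sets_upper_level[OF Zm] sets.Int[OF A sets_upper_level[OF Zm]]
      unfolding submodular_cap_def by blast
    then show ?thesis unfolding union inter G_def by (auto simp: indicator_def)
  qed
  have "choquet M \<nu> W \<le> (\<integral>x. (\<nu> (upper_level M Z x) - indicator {..0} x) + (G (x - c) - G x)
       - \<nu> A * (indicator {..0} x - indicator {..c} x) \<partial>lborel)"
    unfolding choquet_def
    by (rule integral_mono[OF integrable_choquet_integrand[OF cap W] _ pointwise])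
       (use integrable_choquet_integrand[OF cap Z] G G_shift integral_indicator_atMost_diff[of c]
         in auto)
  also have "\<dots> = choquet M \<nu> Z + c * \<nu> A"
    unfolding choquet_def
    using integrable_choquet_integrand[OF cap Z] G G_shift integral_indicator_atMost_diff[of c]
    by (simp add: Bochner_Integration.integral_add Bochner_Integration.integral_diff)
  finally show ?thesis unfolding W_def .
qed

lemma choquet_add_truncated_le:
  assumes cap: "capacity M \<nu>" and sub: "submodular_cap M \<nu>"
    and X: "X \<in> bdd_meas M" and Y: "Y \<in> bdd_meas M" and h: "0 \<le> h"
    and Y_nonneg: "\<And>\<omega>. \<omega> \<in> space M \<Longrightarrow> 0 \<le> Y \<omega>"
  shows "choquet M \<nu> (\<lambda>\<omega>. X \<omega> + min (Y \<omega>) (real k * h))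
    \<le> choquet M \<nu> X + h * (\<Sum>j<k. \<nu> {\<omega>\<in>space M. real j * h < Y \<omega>})"
proof (induction k)
  case 0
  have "choquet M \<nu> (\<lambda>\<omega>. X \<omega> + min (Y \<omega>) (real 0 * h)) = choquet M \<nu> X"
    by (rule choquet_cong) (simp add: Y_nonneg)
  then show ?case by simp
next
  case (Suc k)
  let ?F = "\<lambda>k \<omega>. X \<omega> + min (Y \<omega>) (real k * h)"
  let ?A = "{\<omega>\<in>space M. real k * h < Y \<omega>}"
  have [measurable]: "Y \<in> borel_measurable M" using bdd_measD(1)[OF Y] .
  have A: "?A \<in> sets M" by measurable
  have F: "?F k \<in> bdd_meas M" for k
    by (rule bdd_meas_add[OF X bdd_meas_min_const[OF Y]])
  have "choquet M \<nu> (?F (Suc k)) \<le> choquet M \<nu> (\<lambda>\<omega>. ?F k \<omega> + h * indicator ?A \<omega>)"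
    by (rule choquet_mono[OF cap F bdd_meas_add[OF F bdd_meas_cmult[OF bdd_meas_indicator[OF A]]]])
       (auto simp: indicator_def min_def algebra_simps)
  also have "\<dots> \<le> choquet M \<nu> (?F k) + h * \<nu> ?A"
    by (rule choquet_add_indicator_le[OF cap sub F A h])
  also have "\<dots> \<le> choquet M \<nu> X + h * (\<Sum>j<Suc k. \<nu> {\<omega>\<in>space M. real j * h < Y \<omega>})"
    using Suc.IH by (simp add: algebra_simps)
  finally show ?case .
qed

lemma disjoint_family_grid_intervals:
  fixes h :: real
  assumes h: "0 < h"
  shows "disjoint_family (\<lambda>j::nat. {real j * h - h <.. real j * h})"
  unfolding disjoint_family_on_def
proof (intro ballI impI)
  fix i j :: nat assume "i \<noteq> j"
  then have "real i + 1 \<le> real j \<or> real j + 1 \<le> real i" by linarith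
  then have "real i * h + h \<le> real j * h \<or> real j * h + h \<le> real i * h"
    using h by (metis distrib_right mult_1 mult_right_mono less_imp_le)
  then show "{real i * h - h <.. real i * h} \<inter> {real j * h - h <.. real j * h} = {}"
    by auto
qed

lemma choquet_shifted_integrand:
  assumes cap: "capacity M \<nu>" and Y: "Y \<in> bdd_meas M"
  shows "integrable lborel (\<lambda>x. \<nu> (upper_level M Y x) - indicator {..-h} x)"
    and "(\<integral>x. \<nu> (upper_level M Y x) - indicator {..-h} x \<partial>lborel) = choquet M \<nu> Y + h"
proof -
  have split: "(\<lambda>x. \<nu> (upper_level M Y x) - indicator {..-h} x)
      = (\<lambda>x. (\<nu> (upper_level M Y x) - indicator {..0} x) + (indicator {..0} x - indicator {..-h} x))"
    by (simp add: fun_eq_iff)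
  note integrands = integrable_choquet_integrand[OF cap Y] conjunct1[OF integral_indicator_atMost_diff]
  show "integrable lborel (\<lambda>x. \<nu> (upper_level M Y x) - indicator {..-h} x)"
    unfolding split by (rule Bochner_Integration.integrable_add[OF integrands])
  show "(\<integral>x. \<nu> (upper_level M Y x) - indicator {..-h} x \<partial>lborel) = choquet M \<nu> Y + h"
    unfolding split choquet_def Bochner_Integration.integral_add[OF integrands]
    using integral_indicator_atMost_diff[of "-h"] by simp
qed

lemma layer_sum_le_choquet:
  assumes cap: "capacity M \<nu>" and Y: "Y \<in> bdd_meas M" and h: "0 < h"
    and Y_nonneg: "\<And>\<omega>. \<omega> \<in> space M \<Longrightarrow> 0 \<le> Y \<omega>"
  shows "h * (\<Sum>j<N. \<nu> {\<omega>\<in>space M. real j * h < Y \<omega>}) \<le> choquet M \<nu> Y + h"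
proof -
  define L where "L j = {\<omega>\<in>space M. real j * h < Y \<omega>}" for j :: nat
  define I where "I = (\<lambda>j::nat. {real j * h - h <.. real j * h})"
  define \<psi> where "\<psi> = (\<lambda>x. \<nu> (upper_level M Y x) - indicator {..-h} x)"
  have [measurable]: "Y \<in> borel_measurable M" using bdd_measD(1)[OF Y] .
  have L: "L j \<in> sets M" for j unfolding L_def by measurable
  have \<psi>_nonneg: "0 \<le> \<psi> x" for x
  proof (cases "x \<le> -h")
    case True
    then have "upper_level M Y x = space M"
      using Y_nonneg h by (force simp: upper_level_def)
    then show ?thesis using cap True by (simp add: \<psi>_def capacity_def)
  next
    case False
    then show ?thesis
      using capacity_bounds(1)[OF cap sets_upper_level] by (simp add: \<psi>_def)
  qed
  have below_\<psi>: "(\<Sum>j<N. \<nu> (L j) * indicator (I j) x) \<le> \<psi> x" for x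
  proof (cases "\<exists>j<N. x \<in> I j")
    case True
    then obtain j where j: "j < N" "x \<in> I j" by blast
    have "L j \<subseteq> upper_level M Y x" using j(2) by (auto simp: L_def I_def upper_level_def)
    moreover have "\<not> x \<le> -h"
    proof -
      have "0 \<le> real j * h" "real j * h - h < x" using h j(2) by (simp_all add: I_def)
      then show ?thesis by linarith
    qed
    ultimately have "\<nu> (L j) \<le> \<psi> x"
      using capacity_mono[OF cap L sets_upper_level] by (simp add: \<psi>_def)
    moreover have "(\<Sum>i<N. \<nu> (L i) * indicator (I i) x) = \<nu> (L j)"
      using sum_indicator_disjoint_family[where f="\<lambda>i. \<nu> (L i)" and A=I and P="{..<N}"]
        disjoint_family_on_mono[OF subset_UNIV disjoint_family_grid_intervals[OF h]] j
      unfolding I_def by simp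
    ultimately show ?thesis by simp
  next
    case False
    then show ?thesis using \<psi>_nonneg[of x] by (simp add: indicator_def)
  qed
  have pieces: "integrable lborel (\<lambda>x. \<nu> (L j) * indicator (I j) x)" for j
    using h by (auto simp: I_def intro!: integrable_real_indicator)
  have "h * (\<Sum>j<N. \<nu> (L j)) = (\<Sum>j<N. \<integral>x. \<nu> (L j) * indicator (I j) x \<partial>lborel)"
    using h by (simp add: I_def sum_distrib_left mult.commute)
  also have "\<dots> = (\<integral>x. (\<Sum>j<N. \<nu> (L j) * indicator (I j) x) \<partial>lborel)"
    by (intro Bochner_Integration.integral_sum[symmetric] pieces)
  also have "\<dots> \<le> integral\<^sup>L lborel \<psi>"
    using choquet_shifted_integrand(1)[OF cap Y, of h]
    by (intro integral_mono below_\<psi> Bochner_Integration.integrable_sum pieces) (simp add: \<psi>_def)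
  also have "\<dots> = choquet M \<nu> Y + h"
    unfolding \<psi>_def by (rule choquet_shifted_integrand(2)[OF cap Y])
  finally show ?thesis by (simp add: L_def)
qed

lemma choquet_add_nonneg_le:
  assumes cap: "capacity M \<nu>" and sub: "submodular_cap M \<nu>"
    and X: "X \<in> bdd_meas M" and Y: "Y \<in> bdd_meas M" and h: "0 < h"
    and Y_nonneg: "\<And>\<omega>. \<omega> \<in> space M \<Longrightarrow> 0 \<le> Y \<omega>"
  shows "choquet M \<nu> (\<lambda>\<omega>. X \<omega> + Y \<omega>) \<le> choquet M \<nu> X + choquet M \<nu> Y + h"
proof -
  obtain B where B: "\<forall>\<omega>\<in>space M. \<bar>Y \<omega>\<bar> \<le> B" using bdd_measD(2)[OF Y] by blast
  obtain N :: nat where "B / h \<le> real N" using real_arch_simple by blast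
  then have N: "B \<le> real N * h" using h by (simp add: field_simps)
  have "choquet M \<nu> (\<lambda>\<omega>. X \<omega> + Y \<omega>) = choquet M \<nu> (\<lambda>\<omega>. X \<omega> + min (Y \<omega>) (real N * h))"
    by (rule choquet_cong) (use B N in force)
  also have "\<dots> \<le> choquet M \<nu> X + h * (\<Sum>j<N. \<nu> {\<omega>\<in>space M. real j * h < Y \<omega>})"
    using choquet_add_truncated_le[OF cap sub X Y _ Y_nonneg] h by simp
  also have "\<dots> \<le> choquet M \<nu> X + choquet M \<nu> Y + h"
    using layer_sum_le_choquet[OF cap Y h Y_nonneg] by simp
  finally show ?thesis .
qed

lemma choquet_subadditive:
  assumes cap: "capacity M \<nu>" and sub: "submodular_cap M \<nu>"
    and X: "X \<in> bdd_meas M" and Y: "Y \<in> bdd_meas M"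
  shows "choquet M \<nu> (\<lambda>\<omega>. X \<omega> + Y \<omega>) \<le> choquet M \<nu> X + choquet M \<nu> Y"
proof (rule field_le_epsilon)
  fix h :: real assume h: "0 < h"
  obtain K where K: "\<forall>\<omega>\<in>space M. \<bar>Y \<omega>\<bar> \<le> K" using bdd_measD(2)[OF Y] by blast
  have "choquet M \<nu> (\<lambda>\<omega>. X \<omega> + Y \<omega>) + K = choquet M \<nu> (\<lambda>\<omega>. X \<omega> + (Y \<omega> + K))"
    using choquet_add_const[OF cap bdd_meas_add[OF X Y], of K] by (simp add: add.assoc)
  also have "\<dots> \<le> choquet M \<nu> X + choquet M \<nu> (\<lambda>\<omega>. Y \<omega> + K) + h"
    by (rule choquet_add_nonneg_le[OF cap sub X bdd_meas_add_const[OF Y] h]) (use K in force)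
  also have "\<dots> = choquet M \<nu> X + choquet M \<nu> Y + h + K"
    using choquet_add_const[OF cap Y] by simp
  finally show "choquet M \<nu> (\<lambda>\<omega>. X \<omega> + Y \<omega>) \<le> choquet M \<nu> X + choquet M \<nu> Y + h"
    by simp
qed

lemma coherent_choquet:
  assumes cap: "capacity M \<nu>" and sub: "submodular_cap M \<nu>"
  shows "coherent M (choquet M \<nu>)"
  unfolding coherent_def
proof (intro conjI ballI allI impI)
  fix X Y assume "X \<in> bdd_meas M" "Y \<in> bdd_meas M" "\<forall>\<omega>\<in>space M. X \<omega> \<le> Y \<omega>"
  then show "choquet M \<nu> X \<le> choquet M \<nu> Y" using choquet_mono[OF cap] by blast
next
  fix X c assume "X \<in> bdd_meas M"
  then show "choquet M \<nu> (\<lambda>\<omega>. X \<omega> + c) = choquet M \<nu> X + c" by (rule choquet_add_const[OF cap])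
next
  fix X and l :: real assume "0 < l"
  then show "choquet M \<nu> (\<lambda>\<omega>. l * X \<omega>) = l * choquet M \<nu> X" using choquet_cmult[OF cap] by simp
next
  fix X Y and l :: real
  assume X: "X \<in> bdd_meas M" and Y: "Y \<in> bdd_meas M" and l: "0 \<le> l \<and> l \<le> 1"
  have "choquet M \<nu> (\<lambda>\<omega>. l * X \<omega> + (1 - l) * Y \<omega>)
      \<le> choquet M \<nu> (\<lambda>\<omega>. l * X \<omega>) + choquet M \<nu> (\<lambda>\<omega>. (1 - l) * Y \<omega>)"
    by (rule choquet_subadditive[OF cap sub bdd_meas_cmult[OF X] bdd_meas_cmult[OF Y]])
  also have "\<dots> = l * choquet M \<nu> X + (1 - l) * choquet M \<nu> Y"
    using choquet_cmult[OF cap] l by simp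
  finally show "choquet M \<nu> (\<lambda>\<omega>. l * X \<omega> + (1 - l) * Y \<omega>) \<le> l * choquet M \<nu> X + (1 - l) * choquet M \<nu> Y" .
qed

section \<open>Quantiles of survival functions\<close>

text \<open>In the application \<open>g x = w {X \<ge> x}\<close> for some \<open>X\<close> bounded by \<open>K\<close>.\<close>

context
  fixes g :: "real \<Rightarrow> real" and K :: real
  assumes g_antimono: "\<And>x y. x \<le> y \<Longrightarrow> g y \<le> g x"
    and g_below: "\<And>x. x \<le> -K \<Longrightarrow> g x = 1"
    and g_above: "\<And>x. K < x \<Longrightarrow> g x = 0"
begin

lemma survival_bounds: "0 \<le> g x" "g x \<le> 1"
  using g_antimono[of x "max x (K + 1)"] g_above[of "max x (K + 1)"]
    g_antimono[of "min x (-K)" x] g_below[of "min x (-K)"] by auto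

lemma survival_support_nonneg: "0 \<le> K"
  using g_below[of 0] g_above[of 0] by fastforce

lemma quantile_set_nonempty: "0 \<le> t \<Longrightarrow> K + 1 \<in> {x. g x \<le> t}"
  using g_above[of "K + 1"] by simp

lemma quantile_set_lower: "t < 1 \<Longrightarrow> g x \<le> t \<Longrightarrow> -K < x"
  using g_below[of x] by force

lemma quantile_bdd_below: "t < 1 \<Longrightarrow> bdd_below {x. g x \<le> t}"
  using quantile_set_lower by (intro bdd_belowI[of _ "-K"]) (simp add: less_imp_le)

lemma quantile_ge: "0 \<le> t \<Longrightarrow> t < 1 \<Longrightarrow> -K \<le> quantile g t"
  unfolding quantile_def
  by (rule cInf_greatest) (use quantile_set_nonempty quantile_set_lower less_imp_le in blast)+

lemma less_quantile_imp: "t < 1 \<Longrightarrow> x < quantile g t \<Longrightarrow> t < g x"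
  unfolding quantile_def using cInf_lower[OF _ quantile_bdd_below, of x t] by force

lemma quantile_less_imp:
  assumes "0 \<le> t" "t < 1" "quantile g t < x"
  shows "g x \<le> t"
proof -
  have "{x. g x \<le> t} \<noteq> {}" using quantile_set_nonempty[OF assms(1)] by blast
  then obtain y where "g y \<le> t" "y < x"
    using assms(3) cInf_less_iff[OF _ quantile_bdd_below[OF assms(2)]] by (auto simp: quantile_def)
  then show ?thesis using g_antimono[of y x] by simp
qed

lemma quantile_le: "0 \<le> t \<Longrightarrow> t < 1 \<Longrightarrow> quantile g t \<le> K"
  using less_quantile_imp[of t "(quantile g t + K) / 2"] g_above[of "(quantile g t + K) / 2"]
  by (cases "quantile g t \<le> K") auto

lemma quantile_antimono: "0 \<le> t \<Longrightarrow> t \<le> t' \<Longrightarrow> t' < 1 \<Longrightarrow> quantile g t' \<le> quantile g t"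
  unfolding quantile_def
  by (rule cInf_superset_mono) (use quantile_set_nonempty quantile_bdd_below[of t'] in auto)

lemma borel_measurable_survival [measurable]: "g \<in> borel_measurable borel"
  using borel_measurable_antimono g_antimono by blast

lemma emeasure_quantile_section:
  assumes t: "0 \<le> t" "t < 1"
  shows "emeasure lborel {x. -K \<le> x \<and> x \<le> K \<and> t < g x} = ennreal (quantile g t + K)"
proof -
  define S where "S = {x. -K \<le> x \<and> x \<le> K \<and> t < g x}"
  have S: "S \<in> sets lborel" unfolding S_def by measurable
  have "{-K..<quantile g t} \<subseteq> S"
    using quantile_le[OF t] less_quantile_imp[OF t(2)] by (force simp: S_def)
  moreover have "S \<subseteq> {-K..quantile g t}"
  proof
    fix x assume "x \<in> S"
    then have "-K \<le> x" "t < g x" by (auto simp: S_def)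
    then show "x \<in> {-K..quantile g t}"
      using quantile_less_imp[OF t, of x] by (cases "quantile g t < x") auto
  qed
  ultimately show ?thesis
    using emeasure_mono[of "{-K..<quantile g t}" S lborel] emeasure_mono[of S "{-K..quantile g t}" lborel]
      S quantile_ge[OF t] by (auto simp: S_def[symmetric] intro: antisym)
qed

lemma nn_integral_quantile:
  assumes \<alpha>: "0 < \<alpha>" "\<alpha> \<le> 1"
  shows "(\<integral>\<^sup>+x. ennreal (indicator {-K..K} x * min \<alpha> (g x)) \<partial>lborel)
       = (\<integral>\<^sup>+t. ennreal (indicator {0<..<\<alpha>} t * (quantile g t + K)) \<partial>lborel)"
proof -
  define f where
    "f t x = ennreal (indicator {0<..<\<alpha>} t * indicator {-K..K} x * (if t < g x then 1 else 0))"
    for t x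
  have f: "case_prod f \<in> borel_measurable (lborel \<Otimes>\<^sub>M lborel)" unfolding f_def by measurable
  have section_x: "(\<integral>\<^sup>+t. f t x \<partial>lborel) = ennreal (indicator {-K..K} x * min \<alpha> (g x))" for x
  proof -
    have "(\<lambda>t. f t x) = (\<lambda>t. ennreal (indicator {-K..K} x) * indicator {0<..<min \<alpha> (g x)} t)"
      by (auto simp: fun_eq_iff f_def indicator_def)
    moreover have "emeasure lborel {0<..<min \<alpha> (g x)} = ennreal (min \<alpha> (g x))"
      using survival_bounds[of x] \<alpha> by simp
    ultimately show ?thesis
      by (cases "x \<in> {-K..K}") (simp_all add: nn_integral_cmult_indicator)
  qed
  have section_t: "(\<integral>\<^sup>+x. f t x \<partial>lborel) = ennreal (indicator {0<..<\<alpha>} t * (quantile g t + K))" for t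
  proof (cases "t \<in> {0<..<\<alpha>}")
    case True
    then have "(\<lambda>x. f t x) = indicator {x. -K \<le> x \<and> x \<le> K \<and> t < g x}"
      by (auto simp: fun_eq_iff f_def indicator_def)
    moreover have "{x. -K \<le> x \<and> x \<le> K \<and> t < g x} \<in> sets lborel" by measurable
    ultimately show ?thesis
      using emeasure_quantile_section[of t] True \<alpha> by simp
  qed (simp add: f_def)
  show ?thesis
    using lborel_pair.Fubini'[OF f] unfolding section_x section_t .
qed

lemma integrable_indicator_quantile:
  assumes \<alpha>: "0 < \<alpha>" "\<alpha> \<le> 1"
  shows "integrable lborel (\<lambda>t. indicator {0<..<\<alpha>} t * (quantile g t + K))"
proof -
  have "mono_on {0<..<\<alpha>} (\<lambda>t. - quantile g t)"
    by (rule mono_onI) (use quantile_antimono \<alpha> in force)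
  then have "(\<lambda>t. - quantile g t) \<in> borel_measurable (restrict_space borel {0<..<\<alpha>})"
    by (rule borel_measurable_mono_on_fnc)
  then have [measurable]: "(\<lambda>t. indicator {0<..<\<alpha>} t *\<^sub>R (- quantile g t)) \<in> borel_measurable borel"
    by (subst (asm) borel_measurable_restrict_space_iff) auto
  have split: "(\<lambda>t. indicator {0<..<\<alpha>} t * (quantile g t + K))
      = (\<lambda>t. K * indicator {0<..<\<alpha>} t - indicator {0<..<\<alpha>} t *\<^sub>R (- quantile g t))"
    by (simp add: fun_eq_iff algebra_simps)
  show ?thesis
  proof (rule integrable_lborel_bounded_support[where B="2 * K" and a=0 and b=\<alpha>])
    show "(\<lambda>t. indicator {0<..<\<alpha>} t * (quantile g t + K)) \<in> borel_measurable borel"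
      unfolding split by measurable
    show "\<bar>indicator {0<..<\<alpha>} t * (quantile g t + K)\<bar> \<le> 2 * K" for t
      using quantile_ge[of t] quantile_le[of t] \<alpha> survival_support_nonneg
      by (auto simp: indicator_def)
  qed (auto simp: indicator_def)
qed

lemma interval_integral_quantile:
  assumes \<alpha>: "0 < \<alpha>" "\<alpha> \<le> 1"
  shows "(LBINT t=0..\<alpha>. quantile g t) = (\<integral>x. min \<alpha> (g x) - \<alpha> * indicator {..0} x \<partial>lborel)"
proof -
  define \<phi> where "\<phi> t = indicator {0<..<\<alpha>} t * (quantile g t + K)" for t
  define H where "H x = indicator {-K..K} x * min \<alpha> (g x)" for x
  have \<phi>: "integrable lborel \<phi>"
    unfolding \<phi>_def by (rule integrable_indicator_quantile[OF \<alpha>])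
  have H: "integrable lborel H"
  proof (rule integrable_lborel_bounded_support[where B=1 and a="-K" and b=K])
    show "H \<in> borel_measurable borel" unfolding H_def by measurable
  qed (use survival_bounds \<alpha> in \<open>auto simp: H_def indicator_def\<close>)
  have H_nonneg: "0 \<le> H x" for x
    using survival_bounds \<alpha> by (simp add: H_def)
  have \<phi>_nonneg: "0 \<le> \<phi> t" for t
    using quantile_ge[of t] \<alpha> by (auto simp: \<phi>_def indicator_def)
  have "ennreal (integral\<^sup>L lborel H) = (\<integral>\<^sup>+x. ennreal (H x) \<partial>lborel)"
    by (rule nn_integral_eq_integral[OF H, symmetric]) (simp add: H_nonneg)
  also have "\<dots> = (\<integral>\<^sup>+t. ennreal (\<phi> t) \<partial>lborel)"
    unfolding H_def \<phi>_def by (rule nn_integral_quantile[OF \<alpha>])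
  also have "\<dots> = ennreal (integral\<^sup>L lborel \<phi>)"
    by (rule nn_integral_eq_integral[OF \<phi>]) (simp add: \<phi>_nonneg)
  finally have H_eq_\<phi>: "integral\<^sup>L lborel H = integral\<^sup>L lborel \<phi>"
    using H_nonneg \<phi>_nonneg by (simp add: Bochner_Integration.integral_nonneg)
  have "(LBINT t=0..\<alpha>. quantile g t) = (\<integral>t. \<phi> t - K * indicator {0<..<\<alpha>} t \<partial>lborel)"
    using \<alpha> by (simp add: interval_lebesgue_integral_def set_lebesgue_integral_def einterval_def
        zero_ereal_def greaterThanLessThan_def greaterThan_def lessThan_def Collect_conj_eq[symmetric]
        \<phi>_def algebra_simps)
  also have "\<dots> = integral\<^sup>L lborel \<phi> - K * \<alpha>"
    using \<phi> \<alpha> by simp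
  also have "\<dots> = (\<integral>x. H x - \<alpha> * indicator {-K..0} x \<partial>lborel)"
    using H \<alpha> survival_support_nonneg H_eq_\<phi> by simp
  also have "\<dots> = (\<integral>x. min \<alpha> (g x) - \<alpha> * indicator {..0} x \<partial>lborel)"
    by (rule Bochner_Integration.integral_cong)
       (use g_below g_above survival_support_nonneg \<alpha> in \<open>auto simp: H_def indicator_def\<close>)
  finally show ?thesis .
qed

end

section \<open>Expected shortfall\<close>

lemma ES_eq_choquet:
  assumes cap: "capacity M w" and \<alpha>: "0 < \<alpha>" "\<alpha> \<le> 1" and X: "X \<in> bdd_meas M"
  shows "ES M w \<alpha> X = choquet M (distorted_cap w \<alpha>) X"
proof -
  obtain K where K: "\<forall>\<omega>\<in>space M. \<bar>X \<omega>\<bar> \<le> K" using bdd_measD(2)[OF X] by blast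
  define g where "g x = w (upper_level M X x)" for x
  have Xm: "X \<in> borel_measurable M" using bdd_measD(1)[OF X] .
  have g_antimono: "g y \<le> g x" if "x \<le> y" for x y
    unfolding g_def
    by (rule capacity_mono[OF cap sets_upper_level[OF Xm] sets_upper_level[OF Xm]
          upper_level_antimono[OF that]])
  have g_below: "g x = 1" if "x \<le> -K" for x
    using upper_level_eq_space[of M X K x] K that cap by (simp add: g_def capacity_def)
  have g_above: "g x = 0" if "K < x" for x
    using upper_level_eq_empty[of M X K x] K that cap by (simp add: g_def capacity_def)
  have "ES M w \<alpha> X = (1 / \<alpha>) * (\<integral>x. min \<alpha> (g x) - \<alpha> * indicator {..0} x \<partial>lborel)"
    using interval_integral_quantile[of g K, OF g_antimono g_below g_above \<alpha>]
    by (simp add: ES_def VaR_def quantile_def g_def upper_level_def)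
  also have "\<dots> = (\<integral>x. (1 / \<alpha>) * (min \<alpha> (g x) - \<alpha> * indicator {..0} x) \<partial>lborel)"
    by simp
  also have "\<dots> = choquet M (distorted_cap w \<alpha>) X"
    unfolding choquet_def distorted_cap_def g_def
    by (rule Bochner_Integration.integral_cong) (use \<alpha> in \<open>auto simp: min_def field_simps\<close>)
  finally show ?thesis .
qed

lemma min_divide_one_mono:
  fixes \<alpha> x y :: real
  assumes "0 < \<alpha>" "x \<le> y"
  shows "min (x / \<alpha>) 1 \<le> min (y / \<alpha>) 1"
  using assms by (intro min.mono divide_right_mono) auto

lemma min_divide_one_submodular:
  fixes a b c d \<alpha> :: real
  assumes "0 < \<alpha>" "a \<le> b" "a \<le> c" "a + d \<le> b + c"
  shows "min (d / \<alpha>) 1 + min (a / \<alpha>) 1 \<le> min (b / \<alpha>) 1 + min (c / \<alpha>) 1"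
proof (cases "\<alpha> \<le> b \<or> \<alpha> \<le> c")
  case True
  moreover have "min (a / \<alpha>) 1 \<le> min (b / \<alpha>) 1" "min (a / \<alpha>) 1 \<le> min (c / \<alpha>) 1"
    using assms min_divide_one_mono by auto
  moreover have "min (b / \<alpha>) 1 = 1 \<or> min (c / \<alpha>) 1 = 1"
    using True assms(1) by (auto simp: min_def le_divide_eq_1_pos)
  moreover have "min (d / \<alpha>) 1 \<le> 1" by simp
  ultimately show ?thesis by linarith
next
  case False
  then have "min (b / \<alpha>) 1 + min (c / \<alpha>) 1 = (b + c) / \<alpha>"
    using assms(1) by (simp add: min_def field_simps)
  moreover have "(a + d) / \<alpha> \<le> (b + c) / \<alpha>"
    using assms by (simp add: divide_right_mono)
  moreover have "min (d / \<alpha>) 1 + min (a / \<alpha>) 1 \<le> (a + d) / \<alpha>"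
    using min.cobounded1[of "d / \<alpha>" 1] min.cobounded1[of "a / \<alpha>" 1]
    by (simp add: add_divide_distrib)
  ultimately show ?thesis by linarith
qed

lemma capacity_distorted_cap:
  assumes cap: "capacity M w" and \<alpha>: "0 < \<alpha>" "\<alpha> \<le> 1"
  shows "capacity M (distorted_cap w \<alpha>)"
  unfolding capacity_def distorted_cap_def
proof (intro conjI ballI impI)
  fix A B assume "A \<in> sets M" "B \<in> sets M" "A \<subseteq> B"
  then show "min (w A / \<alpha>) 1 \<le> min (w B / \<alpha>) 1"
    using capacity_mono[OF cap] min_divide_one_mono[OF \<alpha>(1)] by blast
next
  have "w {} = 0" "w (space M) = 1" using cap by (simp_all add: capacity_def)
  then show "min (w {} / \<alpha>) 1 = 0" "min (w (space M) / \<alpha>) 1 = 1" using \<alpha> by simp_all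
qed

lemma submodular_distorted_cap:
  assumes cap: "capacity M w" and sub: "submodular_cap M w" and \<alpha>: "0 < \<alpha>"
  shows "submodular_cap M (distorted_cap w \<alpha>)"
  unfolding submodular_cap_def distorted_cap_def
proof (intro ballI)
  fix A B assume A: "A \<in> sets M" and B: "B \<in> sets M"
  then have "w (A \<inter> B) + w (A \<union> B) \<le> w A + w B"
    using sub unfolding submodular_cap_def by fastforce
  moreover have "w (A \<inter> B) \<le> w A" "w (A \<inter> B) \<le> w B"
    using A B capacity_mono[OF cap] by auto
  ultimately show "min (w (A \<union> B) / \<alpha>) 1 + min (w (A \<inter> B) / \<alpha>) 1
      \<le> min (w A / \<alpha>) 1 + min (w B / \<alpha>) 1"
    using min_divide_one_submodular[OF \<alpha>] by blast
qed

lemma distorted_cap_antimono: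
  assumes "0 \<le> w E" "0 < \<alpha>" "\<alpha> \<le> \<beta>"
  shows "distorted_cap w \<beta> E \<le> distorted_cap w \<alpha> E"
  unfolding distorted_cap_def using assms
  by (intro min.mono divide_left_mono) auto

lemma distorted_cap_one: "capacity M w \<Longrightarrow> E \<in> sets M \<Longrightarrow> distorted_cap w 1 E = w E"
  using capacity_bounds[of M w E] by (simp add: distorted_cap_def)

lemma coherent_cong:
  assumes R: "coherent M R" and eq: "\<And>X. X \<in> bdd_meas M \<Longrightarrow> R X = R' X"
  shows "coherent M R'"
proof -
  have "(\<lambda>\<omega>. l * X \<omega> + (1 - l) * Y \<omega>) \<in> bdd_meas M"
    if "X \<in> bdd_meas M" "Y \<in> bdd_meas M" for X Y and l :: real
    using bdd_meas_add[OF bdd_meas_cmult bdd_meas_cmult] that by blast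
  then show ?thesis
    using R unfolding coherent_def by (simp add: eq bdd_meas_add_const bdd_meas_cmult)
qed

lemma coherent_subadditive:
  assumes R: "coherent M R" and X: "X \<in> bdd_meas M" and Y: "Y \<in> bdd_meas M"
  shows "R (\<lambda>\<omega>. X \<omega> + Y \<omega>) \<le> R X + R Y"
proof -
  have convex: "R (\<lambda>\<omega>. l * X' \<omega> + (1 - l) * Y' \<omega>) \<le> l * R X' + (1 - l) * R Y'"
    if "X' \<in> bdd_meas M" "Y' \<in> bdd_meas M" "0 \<le> l" "l \<le> 1" for X' Y' and l :: real
    using R that unfolding coherent_def by blast
  have double: "R (\<lambda>\<omega>. 2 * Z \<omega>) = 2 * R Z" if "Z \<in> bdd_meas M" for Z
    using R that unfolding coherent_def by simp
  have "R (\<lambda>\<omega>. X \<omega> + Y \<omega>) = R (\<lambda>\<omega>. (1/2) * (2 * X \<omega>) + (1 - 1/2) * (2 * Y \<omega>))"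
    by simp
  also have "\<dots> \<le> (1/2) * R (\<lambda>\<omega>. 2 * X \<omega>) + (1 - 1/2) * R (\<lambda>\<omega>. 2 * Y \<omega>)"
    by (rule convex[OF bdd_meas_cmult[OF X] bdd_meas_cmult[OF Y]]) simp_all
  also have "\<dots> = R X + R Y"
    using double[OF X] double[OF Y] by simp
  finally show ?thesis .
qed

lemma coherent_ES:
  assumes cap: "capacity M w" and sub: "submodular_cap M w" and \<alpha>: "0 < \<alpha>" "\<alpha> \<le> 1"
  shows "coherent M (ES M w \<alpha>)"
  using coherent_choquet[OF capacity_distorted_cap[OF cap \<alpha>] submodular_distorted_cap[OF cap sub \<alpha>(1)]]
  by (rule coherent_cong) (simp add: ES_eq_choquet[OF cap \<alpha>])

lemma ES_antimono:
  assumes cap: "capacity M w" and X: "X \<in> bdd_meas M" and \<alpha>\<beta>: "0 < \<alpha>" "\<alpha> \<le> \<beta>" "\<beta> \<le> 1"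
  shows "ES M w \<beta> X \<le> ES M w \<alpha> X"
proof -
  have "choquet M (distorted_cap w \<beta>) X \<le> choquet M (distorted_cap w \<alpha>) X"
  proof (rule choquet_mono_capacity[OF capacity_distorted_cap capacity_distorted_cap X])
    fix E assume "E \<in> sets M"
    then show "distorted_cap w \<beta> E \<le> distorted_cap w \<alpha> E"
      using distorted_cap_antimono capacity_bounds(1)[OF cap] \<alpha>\<beta> by blast
  qed (use cap \<alpha>\<beta> in auto)
  then show ?thesis
    using ES_eq_choquet[OF cap _ _ X] \<alpha>\<beta> by simp
qed

lemma submodular_if_coherent_ES:
  assumes cap: "capacity M w" and coh: "coherent M (ES M w 1)"
  shows "submodular_cap M w"
  unfolding submodular_cap_def
proof (intro ballI)
  fix A B assume A: "A \<in> sets M" and B: "B \<in> sets M"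
  have cap1: "capacity M (distorted_cap w 1)" using capacity_distorted_cap[OF cap] by simp
  have ES_indicator: "ES M w 1 (indicator E) = w E" if "E \<in> sets M" for E
    using ES_eq_choquet[OF cap _ _ bdd_meas_indicator[OF that]] choquet_indicator[OF cap1 that]
      distorted_cap_one[OF cap that] by simp
  have "w (A \<union> B) + w (A \<inter> B) = ES M w 1 (\<lambda>\<omega>. indicator A \<omega> + indicator B \<omega>)"
    using ES_eq_choquet[OF cap _ _ bdd_meas_add[OF bdd_meas_indicator[OF A] bdd_meas_indicator[OF B]]]
      choquet_indicator_add[OF cap1 A B] distorted_cap_one[OF cap] A B by simp
  also have "\<dots> \<le> ES M w 1 (indicator A) + ES M w 1 (indicator B)"
    by (rule coherent_subadditive[OF coh bdd_meas_indicator[OF A] bdd_meas_indicator[OF B]])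
  also have "\<dots> = w A + w B"
    using ES_indicator A B by simp
  finally show "w (A \<union> B) + w (A \<inter> B) \<le> w A + w B" .
qed

theorem corollary3:
  fixes M :: "'a measure" and w :: "'a set \<Rightarrow> real"
  assumes "capacity M w"
  shows "((\<forall>\<alpha>\<in>{0<..1}. coherent M (ES M w \<alpha>)) \<and>
          (\<forall>X\<in>bdd_meas M. \<forall>\<alpha>\<in>{0<..1}. \<forall>\<beta>\<in>{0<..1}. \<alpha> \<le> \<beta> \<longrightarrow> ES M w \<alpha> X \<ge> ES M w \<beta> X))
         \<longleftrightarrow> submodular_cap M w"
proof
  assume "(\<forall>\<alpha>\<in>{0<..1}. coherent M (ES M w \<alpha>)) \<and>
          (\<forall>X\<in>bdd_meas M. \<forall>\<alpha>\<in>{0<..1}. \<forall>\<beta>\<in>{0<..1}. \<alpha> \<le> \<beta> \<longrightarrow> ES M w \<alpha> X \<ge> ES M w \<beta> X)"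
  then show "submodular_cap M w"
    using submodular_if_coherent_ES[OF assms] by simp
next
  assume "submodular_cap M w"
  then show "(\<forall>\<alpha>\<in>{0<..1}. coherent M (ES M w \<alpha>)) \<and>
          (\<forall>X\<in>bdd_meas M. \<forall>\<alpha>\<in>{0<..1}. \<forall>\<beta>\<in>{0<..1}. \<alpha> \<le> \<beta> \<longrightarrow> ES M w \<alpha> X \<ge> ES M w \<beta> X)"
    using coherent_ES[OF assms] ES_antimono[OF assms] by auto
qed

end
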